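(* Let $\mathbf{L}\in\{\mathbf{K}_D,\mathbf{KD}_D,\mathbf{KT}_D\}$ and let $\Gamma\Rightarrow\Delta$ be a sequent. If $\Gamma\Rightarrow\Delta$ is valid in every finite model of the class $\mathbb{M}_{\mathbf{L}}$ (where $\mathbb{M}_{\mathbf{K}_D}=\mathbb{M}$, $\mathbb{M}_{\mathbf{KD}_D}=\mathbb{M}_{\mathbf{ser}}$, $\mathbb{M}_{\mathbf{KT}_D}=\mathbb{M}_{\mathbf{ref}}$), then $\mathsf{G}(\mathbf{L})\vdash\Gamma\Rightarrow\Delta$.
   Context: Language: fix a finite nonempty set $\mathsf{Agt}$ of agents and a countable set $\mathsf{Prop}$ of propositional variables; $\mathsf{Grp}$ is the set of nonempty subsets of $\mathsf{Agt}$. Formulas: $\alpha::=p\mid\bot\mid\alpha\wedge\alpha\mid\alpha\vee\alpha\mid\alpha\rightarrow\alpha\mid\neg\alpha\mid D_G\alpha$ ($p\in\mathsf{Prop}$, $G\in\mathsf{Grp}$). Outmost-boxed formula: one of the form $D_G\gamma$. Semantics: a model $M=(W,(R_G)_{G\in\mathsf{Grp}},V)$ has a set $W$ of states, binary relations $R_G$ on $W$ with $R_H\subseteq R_G$ whenever $G\subseteq H$, and $V:\mathsf{Prop}\to\mathcal P(W)$; it is finite if $W$ is finite. Truth is classical for connectives and $M,w\models D_G\alpha$ iff $M,v\models\alpha$ for all $v$ with $(w,v)\in R_G$. $\mathbb{M}$: all models; $\mathbb{M}_{\mathbf{ser}}$: models with $R_{\{a\}}$ serial for every $a\in\mathsf{Agt}$;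 $\mathbb{M}_{\mathbf{ref}}$: models with every $R_G$ reflexive. A sequent $\Gamma\Rightarrow\Delta$ is valid in a class if $\bigwedge\Gamma\rightarrow\bigvee\Delta$ is true at every state of every model in it (empty conjunction $\top$, empty disjunction $\bot$). Sequent calculi (sequents $\Gamma\Rightarrow\Delta$ are pairs of finite multisets; derivable = root of a finite tree built from initial sequents by rules): $\mathsf{G}(\mathbf{K}_D)$ has initial sequents $\Gamma,p\Rightarrow p,\Delta$ and $\bot,\Gamma\Rightarrow\Delta$; rules $(R\wedge)$ from $\Gamma\Rightarrow\Delta,\alpha_1$ and $\Gamma\Rightarrow\Delta,\alpha_2$ infer $\Gamma\Rightarrow\Delta,\alpha_1\wedge\alpha_2$; $(L\wedge)$ from $\alpha_1,\alpha_2,\Gamma\Rightarrow\Delta$ infer $\alpha_1\wedge\alpha_2,\Gamma\Rightarrow\Delta$; $(R\vee)$ from $\Gamma\Rightarrow\Delta,\alpha_1,\alpha_2$ infer $\Gamma\Rightarrow\Delta,\alpha_1\vee\alpha_2$; $(L\vee)$ from $\alpha_1,\Gamma\Rightarrow\Delta$ and $\alpha_2,\Gamma\Rightarrow\Delta$ infer $\alpha_1\vee\alpha_2,\Gamma\Rightarrow\Delta$; $(R\rightarrow)$ from $\alpha_1,\Gamma\Rightarrow\Delta,\alpha_2$ infer $\Gamma\Rightarrow\Delta,\alpha_1\rightarrow\alpha_2$; $(L\rightarrow)$ from $\Gamma\Rightarrow\Delta,\alpha_1$ and $\alpha_2,\Gamma\Rightarrow\Delta$ infer $\alpha_1\rightarrow\alpha_2,\Gamma\Rightarrow\Delta$;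 $(R\neg)$ from $\alpha,\Gamma\Rightarrow\Delta$ infer $\Gamma\Rightarrow\Delta,\neg\alpha$; $(L\neg)$ from $\Gamma\Rightarrow\Delta,\alpha$ infer $\neg\alpha,\Gamma\Rightarrow\Delta$; $(D_K)$: from $\alpha_1,\dots,\alpha_n\Rightarrow\beta$ ($n\ge0$) infer $\Sigma,D_{G_1}\alpha_1,\dots,D_{G_n}\alpha_n\Rightarrow D_G\beta,\Omega$ where all $G_i\subseteq G$, $\Sigma$ consists only of propositional variables, $\bot$, and $D_H\gamma$ with $H\not\subseteq G$, and $\Omega$ only of propositional variables, $\bot$, outmost-boxed formulas. $\mathsf{G}(\mathbf{KD}_D)$ adds $(D_D)$: from $\Gamma\Rightarrow$ with $\Gamma\neq\emptyset$ infer $\Sigma,D_{\{a\}}\Gamma\Rightarrow\Omega$, $\Sigma$ only propositional variables, $\bot$, $D_H\gamma$ with $H\neq\{a\}$; $\Omega$ only propositional variables, $\bot$, outmost-boxed formulas. $\mathsf{G}(\mathbf{KT}_D)$ adds to $\mathsf{G}(\mathbf{K}_D)$ $(D_T)$: from $D_G\alpha,\alpha,\Gamma\Rightarrow\Delta$ infer $D_G\alpha,\Gamma\Rightarrow\Delta$. *)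

theory Defs
  imports Main "HOL-Library.Multiset" "HOL-Library.Countable"
begin

text \<open>Agents: a finite (nonempty) type 'a.  Propositional variables: a countable type 'p.
  Groups are nonempty sets of agents; box indices are restricted to groups by wf_fm.\<close>

datatype ('a, 'p) fm =
    Atom 'p
  | Bot
  | Conj "('a, 'p) fm" "('a, 'p) fm"
  | Disj "('a, 'p) fm" "('a, 'p) fm"
  | Imp "('a, 'p) fm" "('a, 'p) fm"
  | Neg "('a, 'p) fm"
  | Box "'a set" "('a, 'p) fm"

fun wf_fm :: "('a, 'p) fm \<Rightarrow> bool" where
  "wf_fm (Atom p) = True"
| "wf_fm Bot = True"
| "wf_fm (Conj a b) = (wf_fm a \<and> wf_fm b)"
| "wf_fm (Disj a b) = (wf_fm a \<and> wf_fm b)"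
| "wf_fm (Imp a b) = (wf_fm a \<and> wf_fm b)"
| "wf_fm (Neg a) = wf_fm a"
| "wf_fm (Box G a) = (G \<noteq> {} \<and> wf_fm a)"

fun is_atom :: "('a, 'p) fm \<Rightarrow> bool" where
  "is_atom (Atom p) = True"
| "is_atom _ = False"

fun is_boxed :: "('a, 'p) fm \<Rightarrow> bool" where
  "is_boxed (Box G a) = True"
| "is_boxed _ = False"

record ('w, 'a, 'p) model =
  W :: "'w set"
  R :: "'a set \<Rightarrow> ('w \<times> 'w) set"
  V :: "'p \<Rightarrow> 'w set"

definition is_model :: "('w, 'a, 'p) model \<Rightarrow> bool" where
  "is_model M \<longleftrightarrow>
     (\<forall>G. G \<noteq> {} \<longrightarrow> R M G \<subseteq> W M \<times> W M) \<and>
     (\<forall>p. V M p \<subseteq> W M) \<and>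
     (\<forall>G H. G \<noteq> {} \<longrightarrow> G \<subseteq> H \<longrightarrow> R M H \<subseteq> R M G)"

definition serial_model :: "('w, 'a, 'p) model \<Rightarrow> bool" where
  "serial_model M \<longleftrightarrow> is_model M \<and>
     (\<forall>a. \<forall>w\<in>W M. \<exists>v. (w, v) \<in> R M {a})"

definition refl_model :: "('w, 'a, 'p) model \<Rightarrow> bool" where
  "refl_model M \<longleftrightarrow> is_model M \<and>
     (\<forall>G. G \<noteq> {} \<longrightarrow> (\<forall>w\<in>W M. (w, w) \<in> R M G))"

fun sat :: "('w, 'a, 'p) model \<Rightarrow> 'w \<Rightarrow> ('a, 'p) fm \<Rightarrow> bool" where
  "sat M w (Atom p) = (w \<in> V M p)"
| "sat M w Bot = False"
| "sat M w (Conj a b) = (sat M w a \<and> sat M w b)"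
| "sat M w (Disj a b) = (sat M w a \<or> sat M w b)"
| "sat M w (Imp a b) = (sat M w a \<longrightarrow> sat M w b)"
| "sat M w (Neg a) = (\<not> sat M w a)"
| "sat M w (Box G a) = (\<forall>v. (w, v) \<in> R M G \<longrightarrow> sat M v a)"

definition valid_seq_in ::
  "('w, 'a, 'p) model \<Rightarrow> ('a, 'p) fm multiset \<Rightarrow> ('a, 'p) fm multiset \<Rightarrow> bool" where
  "valid_seq_in M \<Gamma> \<Delta> \<longleftrightarrow>
     (\<forall>w\<in>W M. (\<forall>\<phi>\<in>#\<Gamma>. sat M w \<phi>) \<longrightarrow> (\<exists>\<psi>\<in>#\<Delta>. sat M w \<psi>))"

datatype logic = K_D | KD_D | KT_D

fun model_class :: "logic \<Rightarrow> ('w, 'a, 'p) model \<Rightarrow> bool" where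
  "model_class K_D M = is_model M"
| "model_class KD_D M = serial_model M"
| "model_class KT_D M = refl_model M"

text \<open>Validity in every finite model of the class (states drawn from nat;
  every finite model is isomorphic to one of these).\<close>
definition valid_fin :: "logic \<Rightarrow> ('a, 'p) fm multiset \<Rightarrow> ('a, 'p) fm multiset \<Rightarrow> bool" where
  "valid_fin L \<Gamma> \<Delta> \<longleftrightarrow>
     (\<forall>M :: (nat, 'a, 'p) model. finite (W M) \<longrightarrow> model_class L M \<longrightarrow> valid_seq_in M \<Gamma> \<Delta>)"

inductive derivable :: "logic \<Rightarrow> ('a, 'p) fm multiset \<Rightarrow> ('a, 'p) fm multiset \<Rightarrow> bool"
  for L :: logic where
  init: "derivable L (add_mset (Atom p) \<Gamma>) (add_mset (Atom p) \<Delta>)"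
| botL: "derivable L (add_mset Bot \<Gamma>) \<Delta>"
| conjR: "derivable L \<Gamma> (add_mset a1 \<Delta>) \<Longrightarrow> derivable L \<Gamma> (add_mset a2 \<Delta>)
          \<Longrightarrow> derivable L \<Gamma> (add_mset (Conj a1 a2) \<Delta>)"
| conjL: "derivable L (add_mset a1 (add_mset a2 \<Gamma>)) \<Delta>
          \<Longrightarrow> derivable L (add_mset (Conj a1 a2) \<Gamma>) \<Delta>"
| disjR: "derivable L \<Gamma> (add_mset a1 (add_mset a2 \<Delta>))
          \<Longrightarrow> derivable L \<Gamma> (add_mset (Disj a1 a2) \<Delta>)"
| disjL: "derivable L (add_mset a1 \<Gamma>) \<Delta> \<Longrightarrow> derivable L (add_mset a2 \<Gamma>) \<Delta>
          \<Longrightarrow> derivable L (add_mset (Disj a1 a2) \<Gamma>) \<Delta>"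
| impR: "derivable L (add_mset a1 \<Gamma>) (add_mset a2 \<Delta>)
          \<Longrightarrow> derivable L \<Gamma> (add_mset (Imp a1 a2) \<Delta>)"
| impL: "derivable L \<Gamma> (add_mset a1 \<Delta>) \<Longrightarrow> derivable L (add_mset a2 \<Gamma>) \<Delta>
          \<Longrightarrow> derivable L (add_mset (Imp a1 a2) \<Gamma>) \<Delta>"
| negR: "derivable L (add_mset a \<Gamma>) \<Delta> \<Longrightarrow> derivable L \<Gamma> (add_mset (Neg a) \<Delta>)"
| negL: "derivable L \<Gamma> (add_mset a \<Delta>) \<Longrightarrow> derivable L (add_mset (Neg a) \<Gamma>) \<Delta>"
| DK: "derivable L (image_mset snd \<Phi>) {#\<beta>#}
       \<Longrightarrow> (\<forall>x\<in>#\<Phi>. fst x \<subseteq> G)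
       \<Longrightarrow> (\<forall>\<phi>\<in>#\<Sigma>. is_atom \<phi> \<or> \<phi> = Bot \<or> (\<exists>H \<gamma>. \<phi> = Box H \<gamma> \<and> \<not> H \<subseteq> G))
       \<Longrightarrow> (\<forall>\<phi>\<in>#\<Omega>. is_atom \<phi> \<or> \<phi> = Bot \<or> is_boxed \<phi>)
       \<Longrightarrow> derivable L (\<Sigma> + image_mset (\<lambda>(H, \<alpha>). Box H \<alpha>) \<Phi>) (add_mset (Box G \<beta>) \<Omega>)"
| DD: "L = KD_D \<Longrightarrow> derivable L \<Gamma> {#} \<Longrightarrow> \<Gamma> \<noteq> {#}
       \<Longrightarrow> (\<forall>\<phi>\<in>#\<Sigma>. is_atom \<phi> \<or> \<phi> = Bot \<or> (\<exists>H \<gamma>. \<phi> = Box H \<gamma> \<and> H \<noteq> {a}))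
       \<Longrightarrow> (\<forall>\<phi>\<in>#\<Omega>. is_atom \<phi> \<or> \<phi> = Bot \<or> is_boxed \<phi>)
       \<Longrightarrow> derivable L (\<Sigma> + image_mset (Box {a}) \<Gamma>) \<Omega>"
| DT: "L = KT_D \<Longrightarrow> derivable L (add_mset (Box G \<alpha>) (add_mset \<alpha> \<Gamma>)) \<Delta>
       \<Longrightarrow> derivable L (add_mset (Box G \<alpha>) \<Gamma>) \<Delta>"

end

(*
  A failed proof search yields a finite countermodel.  The propositional rules are invertible, so
  decomposing a compound formula of an underivable sequent leaves an underivable sequent; for KT_D
  the reflexivity rule is applied once to every boxed antecedent formula.  Once only atoms, Bot and
  boxed formulas remain, the conclusions of the modal rules are underivable, hence so are their
  premises, and their countermodels, hung below a new root (with a loop at the root for KT_D),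
  refute the sequent together with every formula decomposed on the way to it.  The search terminates
  because the maximal modal depth, the number of boxed subformulas not yet unpacked and the total
  size decrease lexicographically.  Renumbering the states finally gives a model over nat.
*)

theory Submission
  imports Defs
begin

section \<open>Subformulas and invertible rules\<close>

fun subfms :: "('a, 'p) fm \<Rightarrow> ('a, 'p) fm set" where
  "subfms (Atom p) = {Atom p}"
| "subfms Bot = {Bot}"
| "subfms (Conj a b) = insert (Conj a b) (subfms a \<union> subfms b)"
| "subfms (Disj a b) = insert (Disj a b) (subfms a \<union> subfms b)"
| "subfms (Imp a b) = insert (Imp a b) (subfms a \<union> subfms b)"
| "subfms (Neg a) = insert (Neg a) (subfms a)"
| "subfms (Box G a) = insert (Box G a) (subfms a)"

fun modal_depth :: "('a, 'p) fm \<Rightarrow> nat" where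
  "modal_depth (Atom p) = 0"
| "modal_depth Bot = 0"
| "modal_depth (Conj a b) = max (modal_depth a) (modal_depth b)"
| "modal_depth (Disj a b) = max (modal_depth a) (modal_depth b)"
| "modal_depth (Imp a b) = max (modal_depth a) (modal_depth b)"
| "modal_depth (Neg a) = modal_depth a"
| "modal_depth (Box G a) = Suc (modal_depth a)"

lemma subfms_refl: "\<phi> \<in> subfms \<phi>"
  by (cases \<phi>) auto

lemma subfms_trans: "\<psi> \<in> subfms \<phi> \<Longrightarrow> subfms \<psi> \<subseteq> subfms \<phi>"
  by (induction \<phi>) (auto simp: subfms_refl)

lemma finite_subfms: "finite (subfms \<phi>)"
  by (induction \<phi>) auto

lemma modal_depth_subfms: "\<psi> \<in> subfms \<phi> \<Longrightarrow> modal_depth \<psi> \<le> modal_depth \<phi>"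
  by (induction \<phi>) auto

text \<open>The premises of the left and right rules of a propositional connective, each given by the
  formulas it adds to the antecedent and to the succedent.\<close>

fun left_premises :: "('a, 'p) fm \<Rightarrow> (('a, 'p) fm multiset \<times> ('a, 'p) fm multiset) list" where
  "left_premises (Conj a b) = [({#a, b#}, {#})]"
| "left_premises (Disj a b) = [({#a#}, {#}), ({#b#}, {#})]"
| "left_premises (Imp a b) = [({#}, {#a#}), ({#b#}, {#})]"
| "left_premises (Neg a) = [({#}, {#a#})]"
| "left_premises _ = []"

fun right_premises :: "('a, 'p) fm \<Rightarrow> (('a, 'p) fm multiset \<times> ('a, 'p) fm multiset) list" where
  "right_premises (Conj a b) = [({#}, {#a#}), ({#}, {#b#})]"
| "right_premises (Disj a b) = [({#}, {#a, b#})]"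
| "right_premises (Imp a b) = [({#a#}, {#b#})]"
| "right_premises (Neg a) = [({#a#}, {#})]"
| "right_premises _ = []"

lemma left_premises_eq_Nil_iff: "left_premises \<phi> = [] \<longleftrightarrow> is_atom \<phi> \<or> \<phi> = Bot \<or> is_boxed \<phi>"
  by (cases \<phi>) auto

lemma right_premises_eq_Nil_iff: "right_premises \<phi> = [] \<longleftrightarrow> is_atom \<phi> \<or> \<phi> = Bot \<or> is_boxed \<phi>"
  by (cases \<phi>) auto

lemma left_premises_smaller:
  "(\<Gamma>', \<Delta>') \<in> set (left_premises \<phi>) \<Longrightarrow>
    set_mset (\<Gamma>' + \<Delta>') \<subseteq> subfms \<phi> \<and> sum_mset (image_mset size (\<Gamma>' + \<Delta>')) < size \<phi>"
  by (cases \<phi>) (auto simp: subfms_refl)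

lemma right_premises_smaller:
  "(\<Gamma>', \<Delta>') \<in> set (right_premises \<phi>) \<Longrightarrow>
    set_mset (\<Gamma>' + \<Delta>') \<subseteq> subfms \<phi> \<and> sum_mset (image_mset size (\<Gamma>' + \<Delta>')) < size \<phi>"
  by (cases \<phi>) (auto simp: subfms_refl)

lemma derivable_left_premises:
  assumes "left_premises \<phi> \<noteq> []"
    and "\<forall>(\<Gamma>', \<Delta>') \<in> set (left_premises \<phi>). derivable L (\<Gamma>' + \<Gamma>) (\<Delta>' + \<Delta>)"
  shows "derivable L (add_mset \<phi> \<Gamma>) \<Delta>"
  using assms by (cases \<phi>) (auto intro: derivable.intros)

lemma derivable_right_premises:
  assumes "right_premises \<phi> \<noteq> []"
    and "\<forall>(\<Gamma>', \<Delta>') \<in> set (right_premises \<phi>). derivable L (\<Gamma>' + \<Gamma>) (\<Delta>' + \<Delta>)"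
  shows "derivable L \<Gamma> (add_mset \<phi> \<Delta>)"
  using assms by (cases \<phi>) (auto intro: derivable.intros)

lemma sat_left_premise:
  "(\<Gamma>', \<Delta>') \<in> set (left_premises \<phi>) \<Longrightarrow> \<forall>\<psi>\<in>#\<Gamma>'. sat M w \<psi> \<Longrightarrow> \<forall>\<psi>\<in>#\<Delta>'. \<not> sat M w \<psi> \<Longrightarrow>
    sat M w \<phi>"
  by (cases \<phi>) auto

lemma sat_right_premise:
  "(\<Gamma>', \<Delta>') \<in> set (right_premises \<phi>) \<Longrightarrow> \<forall>\<psi>\<in>#\<Gamma>'. sat M w \<psi> \<Longrightarrow> \<forall>\<psi>\<in>#\<Delta>'. \<not> sat M w \<psi> \<Longrightarrow>
    \<not> sat M w \<phi>"
  by (cases \<phi>) auto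

section \<open>Modal rules for irreducible sequents\<close>

lemma is_boxed_iff: "is_boxed \<phi> \<longleftrightarrow> (\<exists>G a. \<phi> = Box G a)"
  by (cases \<phi>) auto

fun box_of :: "('a, 'p) fm \<Rightarrow> ('a set \<times> ('a, 'p) fm) multiset" where
  "box_of (Box G a) = {#(G, a)#}"
| "box_of _ = {#}"

definition boxes :: "('a, 'p) fm multiset \<Rightarrow> ('a set \<times> ('a, 'p) fm) multiset" where
  "boxes \<Gamma> = sum_mset (image_mset box_of \<Gamma>)"

definition box_bodies :: "('a set \<Rightarrow> bool) \<Rightarrow> ('a, 'p) fm multiset \<Rightarrow> ('a, 'p) fm multiset" where
  "box_bodies P \<Gamma> = image_mset snd (filter_mset (P \<circ> fst) (boxes \<Gamma>))"

lemma boxes_simps [simp]: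
  "boxes {#} = {#}"
  "boxes (add_mset \<phi> \<Gamma>) = box_of \<phi> + boxes \<Gamma>"
  by (simp_all add: boxes_def)

lemma in_boxes_iff: "(G, a) \<in># boxes \<Gamma> \<longleftrightarrow> Box G a \<in># \<Gamma>"
proof (induction \<Gamma>)
  case (add \<phi> \<Gamma>)
  then show ?case by (cases \<phi>) auto
qed simp

lemma in_box_bodies_iff: "a \<in># box_bodies P \<Gamma> \<longleftrightarrow> (\<exists>G. P G \<and> Box G a \<in># \<Gamma>)"
  by (auto simp: box_bodies_def in_boxes_iff image_iff)

lemma modal_depth_box_bodies:
  "a \<in># box_bodies P \<Gamma> \<Longrightarrow> \<exists>\<phi>\<in>#\<Gamma>. modal_depth a < modal_depth \<phi>"
  unfolding in_box_bodies_iff by (metis lessI modal_depth.simps(7))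

lemma split_boxes:
  "\<Gamma> = filter_mset (\<lambda>\<phi>. \<not> (\<exists>G a. \<phi> = Box G a \<and> P G)) \<Gamma>
      + image_mset (\<lambda>(G, a). Box G a) (filter_mset (P \<circ> fst) (boxes \<Gamma>))"
proof (induction \<Gamma>)
  case (add \<phi> \<Gamma>)
  then show ?case by (cases \<phi>) auto
qed simp

lemma derivable_box_right:
  assumes "\<forall>\<phi>\<in>#\<Gamma> + \<Delta>. is_atom \<phi> \<or> \<phi> = Bot \<or> is_boxed \<phi>"
    and "derivable L (box_bodies (\<lambda>H. H \<subseteq> G) \<Gamma>) {#\<beta>#}"
  shows "derivable L \<Gamma> (add_mset (Box G \<beta>) \<Delta>)"
proof -
  let ?\<Sigma> = "filter_mset (\<lambda>\<phi>. \<not> (\<exists>H a. \<phi> = Box H a \<and> H \<subseteq> G)) \<Gamma>"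
  let ?\<Phi> = "filter_mset ((\<lambda>H. H \<subseteq> G) \<circ> fst) (boxes \<Gamma>)"
  have "derivable L (?\<Sigma> + image_mset (\<lambda>(H, \<alpha>). Box H \<alpha>) ?\<Phi>) (add_mset (Box G \<beta>) \<Delta>)"
  proof (rule derivable.DK)
    show "derivable L (image_mset snd ?\<Phi>) {#\<beta>#}"
      using assms(2) by (simp add: box_bodies_def)
    show "\<forall>\<phi>\<in>#?\<Sigma>. is_atom \<phi> \<or> \<phi> = Bot \<or> (\<exists>H \<gamma>. \<phi> = Box H \<gamma> \<and> \<not> H \<subseteq> G)"
      using assms(1) by (auto simp: is_boxed_iff)
    show "\<forall>\<phi>\<in>#\<Delta>. is_atom \<phi> \<or> \<phi> = Bot \<or> is_boxed \<phi>"
      using assms(1) by auto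
  qed auto
  then show ?thesis
    by (simp only: split_boxes[of \<Gamma> "\<lambda>H. H \<subseteq> G", symmetric])
qed

lemma derivable_serial:
  assumes "L = KD_D" and "\<forall>\<phi>\<in>#\<Gamma> + \<Delta>. is_atom \<phi> \<or> \<phi> = Bot \<or> is_boxed \<phi>"
    and "box_bodies (\<lambda>H. H = {a}) \<Gamma> \<noteq> {#}" and "derivable L (box_bodies (\<lambda>H. H = {a}) \<Gamma>) {#}"
  shows "derivable L \<Gamma> \<Delta>"
proof -
  let ?\<Sigma> = "filter_mset (\<lambda>\<phi>. \<not> (\<exists>H b. \<phi> = Box H b \<and> H = {a})) \<Gamma>"
  let ?\<Phi> = "filter_mset ((\<lambda>H. H = {a}) \<circ> fst) (boxes \<Gamma>)"
  have "derivable L (?\<Sigma> + image_mset (Box {a}) (box_bodies (\<lambda>H. H = {a}) \<Gamma>)) \<Delta>"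
  proof (rule derivable.DD)
    show "\<forall>\<phi>\<in>#?\<Sigma>. is_atom \<phi> \<or> \<phi> = Bot \<or> (\<exists>H \<gamma>. \<phi> = Box H \<gamma> \<and> H \<noteq> {a})"
      using assms(2) by (auto simp: is_boxed_iff)
    show "\<forall>\<phi>\<in>#\<Delta>. is_atom \<phi> \<or> \<phi> = Bot \<or> is_boxed \<phi>"
      using assms(2) by auto
  qed (use assms in auto)
  moreover have "image_mset (Box {a}) (box_bodies (\<lambda>H. H = {a}) \<Gamma>)
      = image_mset (\<lambda>(H, b). Box H b) ?\<Phi>"
    unfolding box_bodies_def multiset.map_comp
    by (rule image_mset_cong) (simp add: split_beta)
  ultimately show ?thesis
    by (simp only: split_boxes[of \<Gamma> "\<lambda>H. H = {a}", symmetric])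
qed

section \<open>Termination of proof search\<close>

definition subfms_mset :: "('a, 'p) fm multiset \<Rightarrow> ('a, 'p) fm set" where
  "subfms_mset \<Phi> = (\<Union>\<phi>\<in>set_mset \<Phi>. subfms \<phi>)"

definition max_modal_depth :: "('a, 'p) fm multiset \<Rightarrow> nat" where
  "max_modal_depth \<Phi> = Max (insert 0 (modal_depth ` set_mset \<Phi>))"

definition boxed_subfms :: "('a, 'p) fm multiset \<Rightarrow> ('a set \<times> ('a, 'p) fm) set" where
  "boxed_subfms \<Phi> = {(G, a). Box G a \<in> subfms_mset \<Phi>}"

text \<open>A sequent \<open>\<Gamma> \<Rightarrow> \<Delta>\<close> is ranked through \<open>\<Gamma> + \<Delta>\<close>; the pairs \<open>(G, a)\<close> in the second component
  record the formulas \<open>Box G a\<close> to which the reflexivity rule has already been applied.\<close>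

definition rank_less ::
  "((('a, 'p) fm multiset \<times> ('a set \<times> ('a, 'p) fm) set) \<times>
    (('a, 'p) fm multiset \<times> ('a set \<times> ('a, 'p) fm) set)) set" where
  "rank_less = measures
     [\<lambda>(\<Phi>, B). max_modal_depth \<Phi>, \<lambda>(\<Phi>, B). card (boxed_subfms \<Phi> - B),
      \<lambda>(\<Phi>, B). sum_mset (image_mset size \<Phi>)]"

lemma wf_rank_less: "wf rank_less"
  by (simp add: rank_less_def)

lemma max_modal_depth_le_iff: "max_modal_depth \<Phi> \<le> n \<longleftrightarrow> (\<forall>\<phi>\<in>#\<Phi>. modal_depth \<phi> \<le> n)"
  by (simp add: max_modal_depth_def)

lemma max_modal_depth_less_iff:
  "max_modal_depth \<Phi> < n \<longleftrightarrow> 0 < n \<and> (\<forall>\<phi>\<in>#\<Phi>. modal_depth \<phi> < n)"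
  by (simp add: max_modal_depth_def)

lemma modal_depth_le_max: "\<phi> \<in># \<Phi> \<Longrightarrow> modal_depth \<phi> \<le> max_modal_depth \<Phi>"
  by (simp add: max_modal_depth_def)

lemma max_modal_depth_mono:
  assumes "set_mset \<Psi> \<subseteq> subfms_mset \<Phi>"
  shows "max_modal_depth \<Psi> \<le> max_modal_depth \<Phi>"
  unfolding max_modal_depth_le_iff
proof
  fix \<psi> assume "\<psi> \<in># \<Psi>"
  then obtain \<phi> where "\<phi> \<in># \<Phi>" "\<psi> \<in> subfms \<phi>"
    using assms by (auto simp: subfms_mset_def)
  then show "modal_depth \<psi> \<le> max_modal_depth \<Phi>"
    by (meson modal_depth_subfms modal_depth_le_max order.trans)
qed

lemma subfms_mset_mono:
  assumes "set_mset \<Psi> \<subseteq> subfms_mset \<Phi>"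
  shows "subfms_mset \<Psi> \<subseteq> subfms_mset \<Phi>"
proof
  fix \<chi> assume "\<chi> \<in> subfms_mset \<Psi>"
  then obtain \<psi> where "\<psi> \<in># \<Psi>" "\<chi> \<in> subfms \<psi>"
    by (auto simp: subfms_mset_def)
  moreover obtain \<phi> where "\<phi> \<in># \<Phi>" "\<psi> \<in> subfms \<phi>"
    using assms calculation(1) by (auto simp: subfms_mset_def)
  ultimately show "\<chi> \<in> subfms_mset \<Phi>"
    using subfms_trans by (auto simp: subfms_mset_def)
qed

lemma subfms_mset_refl: "set_mset \<Phi> \<subseteq> subfms_mset \<Phi>"
  unfolding subfms_mset_def using subfms_refl by blast

lemma finite_boxed_subfms: "finite (boxed_subfms \<Phi>)"
proof -
  have "finite (subfms_mset \<Phi>)"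
    by (simp add: subfms_mset_def finite_subfms)
  then have "finite ((\<lambda>(G, a). Box G a) -` subfms_mset \<Phi>)"
    by (rule finite_vimageI) (simp add: inj_on_def)
  then show ?thesis
    by (simp add: boxed_subfms_def vimage_def case_prod_unfold)
qed

lemma rank_less_decompose:
  assumes "set_mset \<Psi> \<subseteq> subfms \<phi>" and "sum_mset (image_mset size \<Psi>) < size \<phi>"
  shows "((\<Psi> + \<Phi>, B), (add_mset \<phi> \<Phi>, B)) \<in> rank_less"
proof -
  have sub: "set_mset (\<Psi> + \<Phi>) \<subseteq> subfms_mset (add_mset \<phi> \<Phi>)"
    using assms(1) subfms_mset_refl by (auto simp: subfms_mset_def)
  have "boxed_subfms (\<Psi> + \<Phi>) \<subseteq> boxed_subfms (add_mset \<phi> \<Phi>)"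
    using subfms_mset_mono[OF sub] by (auto simp: boxed_subfms_def)
  then have "card (boxed_subfms (\<Psi> + \<Phi>) - B) \<le> card (boxed_subfms (add_mset \<phi> \<Phi>) - B)"
    by (meson Diff_mono card_mono finite_Diff finite_boxed_subfms order_refl)
  then show ?thesis
    using max_modal_depth_mono[OF sub] assms(2) by (simp add: rank_less_def) linarith
qed

lemma rank_less_unpack:
  assumes "Box G a \<in># \<Phi>" and "(G, a) \<notin> B"
  shows "((add_mset a \<Phi>, insert (G, a) B), (\<Phi>, B)) \<in> rank_less"
proof -
  have "Box G a \<in> subfms_mset \<Phi>" "a \<in> subfms_mset \<Phi>"
    unfolding subfms_mset_def by (auto intro!: bexI[OF _ assms(1)] simp: subfms_refl)
  then have sub: "set_mset (add_mset a \<Phi>) \<subseteq> subfms_mset \<Phi>" and box: "(G, a) \<in> boxed_subfms \<Phi>"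
    using subfms_mset_refl by (auto simp: boxed_subfms_def)
  have "boxed_subfms (add_mset a \<Phi>) = boxed_subfms \<Phi>"
    using subfms_mset_mono[OF sub] by (auto simp: boxed_subfms_def subfms_mset_def)
  then have "boxed_subfms (add_mset a \<Phi>) - insert (G, a) B \<subset> boxed_subfms \<Phi> - B"
    using box assms(2) by blast
  then have "card (boxed_subfms (add_mset a \<Phi>) - insert (G, a) B) < card (boxed_subfms \<Phi> - B)"
    by (simp add: psubset_card_mono finite_boxed_subfms)
  then show ?thesis
    using max_modal_depth_mono[OF sub] by (simp add: rank_less_def) linarith
qed

lemma rank_less_modal:
  assumes "\<Psi> \<noteq> {#}" and "\<forall>\<psi>\<in>#\<Psi>. \<exists>\<phi>\<in>#\<Phi>. modal_depth \<psi> < modal_depth \<phi>"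
  shows "((\<Psi>, B'), (\<Phi>, B)) \<in> rank_less"
proof -
  have "\<forall>\<psi>\<in>#\<Psi>. modal_depth \<psi> < max_modal_depth \<Phi>"
    using assms(2) max_modal_depth_le_iff by (meson le_refl order.strict_trans2)
  moreover have "0 < max_modal_depth \<Phi>"
    using calculation assms(1) by (metis gr_zeroI less_nat_zero_code multiset_nonemptyE)
  ultimately show ?thesis
    by (simp add: rank_less_def max_modal_depth_less_iff)
qed

section \<open>Tree models\<close>

lemma model_class_is_model: "model_class L M \<Longrightarrow> is_model M"
  by (cases L) (auto simp: serial_model_def refl_model_def)

definition tree_model :: "('p \<Rightarrow> bool) \<Rightarrow> bool \<Rightarrow> 't set \<Rightarrow> ('t \<Rightarrow> ('t list, 'a, 'p) model)
    \<Rightarrow> ('t \<Rightarrow> 't list) \<Rightarrow> ('t \<Rightarrow> 'a set \<Rightarrow> bool) \<Rightarrow> ('t list, 'a, 'p) model" where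
  "tree_model val loop T M r lab =
    \<lparr> W = insert [] (\<Union>t\<in>T. (#) t ` W (M t)),
      R = (\<lambda>G. (if loop then {([], [])} else {}) \<union> {([], t # r t) | t. t \<in> T \<and> lab t G}
               \<union> {(t # s, t # s') | t s s'. t \<in> T \<and> (s, s') \<in> R (M t) G}),
      V = (\<lambda>p. (if val p then {[]} else {}) \<union> {t # s | t s. t \<in> T \<and> s \<in> V (M t) p}) \<rparr>"

lemma in_W_tree_model:
  "w \<in> W (tree_model val loop T M r lab) \<longleftrightarrow> w = [] \<or> (\<exists>t s. w = t # s \<and> t \<in> T \<and> s \<in> W (M t))"
  unfolding tree_model_def by auto

lemma in_V_tree_model:
  "w \<in> V (tree_model val loop T M r lab) p \<longleftrightarrow>
    (w = [] \<and> val p) \<or> (\<exists>t s. w = t # s \<and> t \<in> T \<and> s \<in> V (M t) p)"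
  by (auto simp: tree_model_def)

lemma in_R_tree_model:
  "(w, v) \<in> R (tree_model val loop T M r lab) G \<longleftrightarrow>
    (w = [] \<and> (loop \<and> v = [] \<or> (\<exists>t\<in>T. lab t G \<and> v = t # r t))) \<or>
    (\<exists>t s s'. w = t # s \<and> v = t # s' \<and> t \<in> T \<and> (s, s') \<in> R (M t) G)"
  by (auto simp: tree_model_def)

lemma sat_tree_model_child:
  "t \<in> T \<Longrightarrow> sat (tree_model val loop T M r lab) (t # s) \<phi> = sat (M t) s \<phi>"
  by (induction \<phi> arbitrary: s) (auto simp: in_V_tree_model in_R_tree_model)

lemma is_model_tree_model:
  assumes "\<forall>t\<in>T. is_model (M t) \<and> r t \<in> W (M t)"
    and "\<And>t G H. G \<noteq> {} \<Longrightarrow> G \<subseteq> H \<Longrightarrow> lab t H \<Longrightarrow> lab t G"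
  shows "is_model (tree_model val loop T M r lab)"
proof -
  let ?N = "tree_model val loop T M r lab"
  have "R ?N G \<subseteq> W ?N \<times> W ?N" if "G \<noteq> {}" for G
  proof -
    have "s \<in> W (M t) \<and> s' \<in> W (M t)" if "t \<in> T" "(s, s') \<in> R (M t) G" for t s s'
      using assms(1) \<open>G \<noteq> {}\<close> that unfolding is_model_def by blast
    then show ?thesis
      using assms(1) by (auto simp: in_R_tree_model in_W_tree_model)
  qed
  moreover have "V ?N p \<subseteq> W ?N" for p
  proof -
    have "s \<in> W (M t)" if "t \<in> T" "s \<in> V (M t) p" for t s
      using assms(1) that unfolding is_model_def by blast
    then show ?thesis
      by (auto simp: in_V_tree_model in_W_tree_model)
  qed
  moreover have "R ?N H \<subseteq> R ?N G" if "G \<noteq> {}" "G \<subseteq> H" for G H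
  proof -
    have "(s, s') \<in> R (M t) G" if "t \<in> T" "(s, s') \<in> R (M t) H" for t s s'
      using assms(1) \<open>G \<noteq> {}\<close> \<open>G \<subseteq> H\<close> that unfolding is_model_def by blast
    moreover have "lab t G" if "lab t H" for t
      using assms(2) \<open>G \<noteq> {}\<close> \<open>G \<subseteq> H\<close> that .
    ultimately show ?thesis
      by (auto simp: in_R_tree_model)
  qed
  ultimately show ?thesis
    unfolding is_model_def by blast
qed

lemma finite_tree_model:
  "finite T \<Longrightarrow> \<forall>t\<in>T. finite (W (M t)) \<Longrightarrow> finite (W (tree_model val loop T M r lab))"
  by (simp add: tree_model_def)

lemma tree_model_serial:
  assumes "\<forall>t\<in>T. \<forall>s\<in>W (M t). \<exists>s'. (s, s') \<in> R (M t) {a}" and "\<exists>t\<in>T. lab t {a}"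
  shows "\<forall>w\<in>W (tree_model val loop T M r lab). \<exists>v. (w, v) \<in> R (tree_model val loop T M r lab) {a}"
proof
  fix w
  assume "w \<in> W (tree_model val loop T M r lab)"
  then consider "w = []" | t s where "w = t # s" "t \<in> T" "s \<in> W (M t)"
    by (auto simp: in_W_tree_model)
  then show "\<exists>v. (w, v) \<in> R (tree_model val loop T M r lab) {a}"
  proof cases
    case 1
    obtain t where "t \<in> T" "lab t {a}"
      using assms(2) by blast
    then have "([], t # r t) \<in> R (tree_model val loop T M r lab) {a}"
      by (auto simp: in_R_tree_model)
    with 1 show ?thesis
      by blast
  next
    case (2 t s)
    then obtain s' where "(s, s') \<in> R (M t) {a}"
      using assms(1) by blast
    then have "(t # s, t # s') \<in> R (tree_model val loop T M r lab) {a}"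
      using 2 by (auto simp: in_R_tree_model)
    with 2 show ?thesis
      by blast
  qed
qed

lemma tree_model_refl:
  assumes "loop" and "\<forall>t\<in>T. \<forall>s\<in>W (M t). (s, s) \<in> R (M t) G"
  shows "\<forall>w\<in>W (tree_model val loop T M r lab). (w, w) \<in> R (tree_model val loop T M r lab) G"
  using assms by (auto simp: in_W_tree_model in_R_tree_model)

lemma model_class_tree_model:
  assumes "\<forall>t\<in>T. model_class L (M t) \<and> r t \<in> W (M t)"
    and "\<And>t G H. G \<noteq> {} \<Longrightarrow> G \<subseteq> H \<Longrightarrow> lab t H \<Longrightarrow> lab t G"
    and "L = KD_D \<Longrightarrow> \<forall>a. \<exists>t\<in>T. lab t {a}"
  shows "model_class L (tree_model val (L = KT_D) T M r lab)"
proof -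
  let ?N = "tree_model val (L = KT_D) T M r lab"
  have model: "is_model ?N"
  proof (rule is_model_tree_model)
    show "\<forall>t\<in>T. is_model (M t) \<and> r t \<in> W (M t)"
      using assms(1) model_class_is_model by blast
  qed (rule assms(2))
  show ?thesis
  proof (cases L)
    case KD_D
    have "\<forall>w\<in>W ?N. \<exists>v. (w, v) \<in> R ?N {a}" for a
    proof (rule tree_model_serial)
      show "\<forall>t\<in>T. \<forall>s\<in>W (M t). \<exists>s'. (s, s') \<in> R (M t) {a}"
        using assms(1) KD_D by (simp add: serial_model_def)
      show "\<exists>t\<in>T. lab t {a}"
        using assms(3) KD_D by blast
    qed
    with model KD_D show ?thesis
      by (simp add: serial_model_def)
  next
    case KT_D
    have "\<forall>w\<in>W ?N. (w, w) \<in> R ?N G" if "G \<noteq> {}" for G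
      using assms(1) KT_D that by (intro tree_model_refl) (simp_all add: refl_model_def)
    with model KT_D show ?thesis
      by (simp add: refl_model_def)
  qed (use model in simp)
qed

section \<open>Countermodels\<close>

type_synonym ('a, 'p) edge = "('a set \<times> ('a, 'p) fm) + 'a"

definition has_countermodel :: "logic \<Rightarrow> ('a, 'p) fm set \<Rightarrow> ('a, 'p) fm set \<Rightarrow> bool" where
  "has_countermodel L X Y \<longleftrightarrow> (\<exists>M :: (('a, 'p) edge list, 'a, 'p) model.
     finite (W M) \<and> model_class L M \<and> (\<exists>w\<in>W M. (\<forall>\<phi>\<in>X. sat M w \<phi>) \<and> (\<forall>\<psi>\<in>Y. \<not> sat M w \<psi>)))"

lemma has_countermodel_mono: "has_countermodel L X' Y' \<Longrightarrow> X \<subseteq> X' \<Longrightarrow> Y \<subseteq> Y' \<Longrightarrow> has_countermodel L X Y"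
  unfolding has_countermodel_def by blast

lemma has_countermodel_choice:
  assumes "\<forall>t\<in>T. has_countermodel L (X t) (Y t)"
  obtains M :: "'t \<Rightarrow> (('a, 'p) edge list, 'a, 'p) model" and r
  where "\<forall>t\<in>T. finite (W (M t)) \<and> model_class L (M t) \<and> r t \<in> W (M t) \<and>
    (\<forall>\<phi>\<in>X t. sat (M t) (r t) \<phi>) \<and> (\<forall>\<psi>\<in>Y t. \<not> sat (M t) (r t) \<psi>)"
proof -
  obtain M :: "'t \<Rightarrow> (('a, 'p) edge list, 'a, 'p) model"
    where M: "\<forall>t\<in>T. finite (W (M t)) \<and> model_class L (M t) \<and>
      (\<exists>w\<in>W (M t). (\<forall>\<phi>\<in>X t. sat (M t) w \<phi>) \<and> (\<forall>\<psi>\<in>Y t. \<not> sat (M t) w \<psi>))"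
    using bchoice[OF assms[unfolded has_countermodel_def]] by blast
  then have "\<forall>t\<in>T. \<exists>w. w \<in> W (M t) \<and> (\<forall>\<phi>\<in>X t. sat (M t) w \<phi>) \<and> (\<forall>\<psi>\<in>Y t. \<not> sat (M t) w \<psi>)"
    by blast
  from bchoice[OF this] obtain r
    where "\<forall>t\<in>T. r t \<in> W (M t) \<and> (\<forall>\<phi>\<in>X t. sat (M t) (r t) \<phi>) \<and> (\<forall>\<psi>\<in>Y t. \<not> sat (M t) (r t) \<psi>)"
    by blast
  with M show ?thesis
    using that by blast
qed

lemma has_countermodel_empty: "has_countermodel L {} ({} :: ('a, 'p) fm set)"
proof -
  define M :: "(('a, 'p) edge list, 'a, 'p) model" where
    "M = \<lparr> W = {[]}, R = (\<lambda>G. {([], [])}), V = (\<lambda>p. {}) \<rparr>"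
  have "model_class L M"
    by (cases L) (auto simp: M_def serial_model_def refl_model_def is_model_def)
  moreover have "finite (W M)" "[] \<in> W M"
    by (simp_all add: M_def)
  ultimately show ?thesis
    unfolding has_countermodel_def by blast
qed

definition decomposed_left :: "('a, 'p) fm \<Rightarrow> ('a, 'p) fm set \<Rightarrow> ('a, 'p) fm set \<Rightarrow> bool" where
  "decomposed_left \<phi> X Y \<longleftrightarrow>
     (\<exists>(\<Gamma>', \<Delta>') \<in> set (left_premises \<phi>). set_mset \<Gamma>' \<subseteq> X \<and> set_mset \<Delta>' \<subseteq> Y)"

definition decomposed_right :: "('a, 'p) fm \<Rightarrow> ('a, 'p) fm set \<Rightarrow> ('a, 'p) fm set \<Rightarrow> bool" where
  "decomposed_right \<phi> X Y \<longleftrightarrow>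
     (\<exists>(\<Gamma>', \<Delta>') \<in> set (right_premises \<phi>). set_mset \<Gamma>' \<subseteq> X \<and> set_mset \<Delta>' \<subseteq> Y)"

lemma decomposed_left_mono:
  "decomposed_left \<phi> X Y \<Longrightarrow> X \<subseteq> X' \<Longrightarrow> Y \<subseteq> Y' \<Longrightarrow> decomposed_left \<phi> X' Y'"
  unfolding decomposed_left_def by blast

lemma decomposed_right_mono:
  "decomposed_right \<phi> X Y \<Longrightarrow> X \<subseteq> X' \<Longrightarrow> Y \<subseteq> Y' \<Longrightarrow> decomposed_right \<phi> X' Y'"
  unfolding decomposed_right_def by blast

lemma size_less_of_sum_size_less:
  assumes "\<psi> \<in># \<Psi>" and "sum_mset (image_mset size \<Psi>) < n"
  shows "size \<psi> < n"
proof -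
  obtain \<Psi>' where "\<Psi> = add_mset \<psi> \<Psi>'"
    using assms(1) by (metis multi_member_split)
  then show ?thesis
    using assms(2) by simp
qed

lemma sat_of_decomposed:
  assumes "\<And>\<psi>. size \<psi> < size \<phi> \<Longrightarrow> (\<psi> \<in> X \<longrightarrow> sat M w \<psi>) \<and> (\<psi> \<in> Y \<longrightarrow> \<not> sat M w \<psi>)"
  shows "decomposed_left \<phi> X Y \<Longrightarrow> sat M w \<phi>" and "decomposed_right \<phi> X Y \<Longrightarrow> \<not> sat M w \<phi>"
proof -
  have premise_truth: "(\<forall>\<psi>\<in>#\<Gamma>'. sat M w \<psi>) \<and> (\<forall>\<psi>\<in>#\<Delta>'. \<not> sat M w \<psi>)"
    if "set_mset \<Gamma>' \<subseteq> X" "set_mset \<Delta>' \<subseteq> Y" "sum_mset (image_mset size (\<Gamma>' + \<Delta>')) < size \<phi>"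
    for \<Gamma>' \<Delta>'
    using assms that size_less_of_sum_size_less[of _ "\<Gamma>' + \<Delta>'"] by auto
  show "sat M w \<phi>" if left: "decomposed_left \<phi> X Y"
  proof -
    obtain \<Gamma>' \<Delta>' where "(\<Gamma>', \<Delta>') \<in> set (left_premises \<phi>)" "set_mset \<Gamma>' \<subseteq> X" "set_mset \<Delta>' \<subseteq> Y"
      using left unfolding decomposed_left_def by blast
    then show ?thesis
      using premise_truth sat_left_premise left_premises_smaller by metis
  qed
  show "\<not> sat M w \<phi>" if right: "decomposed_right \<phi> X Y"
  proof -
    obtain \<Gamma>' \<Delta>' where "(\<Gamma>', \<Delta>') \<in> set (right_premises \<phi>)" "set_mset \<Gamma>' \<subseteq> X" "set_mset \<Delta>' \<subseteq> Y"
      using right unfolding decomposed_right_def by blast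
    then show ?thesis
      using premise_truth sat_right_premise right_premises_smaller by metis
  qed
qed

text \<open>The alternative \<open>v = w\<close> in the condition on boxes in \<open>X\<close> is the reflexive loop at the
  root of a countermodel for \<open>KT_D\<close>.\<close>

lemma hintikka_truth:
  assumes "\<And>p. Atom p \<in> X \<Longrightarrow> sat M w (Atom p)" and "\<And>p. Atom p \<in> Y \<Longrightarrow> \<not> sat M w (Atom p)"
    and "Bot \<notin> X"
    and "\<And>\<phi>. \<phi> \<in> X \<Longrightarrow> left_premises \<phi> \<noteq> [] \<Longrightarrow> decomposed_left \<phi> X Y"
    and "\<And>\<phi>. \<phi> \<in> Y \<Longrightarrow> right_premises \<phi> \<noteq> [] \<Longrightarrow> decomposed_right \<phi> X Y"
    and "\<And>G a v. Box G a \<in> X \<Longrightarrow> (w, v) \<in> R M G \<Longrightarrow> v = w \<and> a \<in> X \<or> sat M v a"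
    and "\<And>G a. Box G a \<in> Y \<Longrightarrow> \<exists>v. (w, v) \<in> R M G \<and> \<not> sat M v a"
  shows "(\<phi> \<in> X \<longrightarrow> sat M w \<phi>) \<and> (\<phi> \<in> Y \<longrightarrow> \<not> sat M w \<phi>)"
proof (induction \<phi> rule: measure_induct_rule[of size])
  case (less \<phi>)
  consider "left_premises \<phi> \<noteq> []" "right_premises \<phi> \<noteq> []" | p where "\<phi> = Atom p" | "\<phi> = Bot"
    | G a where "\<phi> = Box G a"
    by (cases \<phi>) auto
  then show ?case
  proof cases
    case 1
    then show ?thesis
      using assms(4,5) sat_of_decomposed[of \<phi> X M w Y, OF less] by blast
  next
    case (4 G a)
    then have "a \<in> X \<longrightarrow> sat M w a"
      using less by simp
    then show ?thesis
      using assms(6,7) 4 by fastforce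
  qed (use assms(1-3) in auto)
qed

section \<open>Proof search\<close>

text \<open>The sets \<open>X\<close> and \<open>Y\<close> collect the formulas met along a branch of the proof search: each of
  them is still in the current sequent or has been decomposed by an invertible rule.  The set \<open>B\<close>
  records the boxed formulas to which the reflexivity rule has already been applied.\<close>

definition expansion :: "('a, 'p) fm multiset \<Rightarrow> ('a, 'p) fm multiset \<Rightarrow> ('a set \<times> ('a, 'p) fm) set
    \<Rightarrow> ('a, 'p) fm set \<Rightarrow> ('a, 'p) fm set \<Rightarrow> bool" where
  "expansion \<Gamma> \<Delta> B X Y \<longleftrightarrow> set_mset \<Gamma> \<subseteq> X \<and> set_mset \<Delta> \<subseteq> Y \<and>
     (\<forall>\<phi>\<in>X. \<phi> \<in># \<Gamma> \<or> decomposed_left \<phi> X Y) \<and> (\<forall>\<psi>\<in>Y. \<psi> \<in># \<Delta> \<or> decomposed_right \<psi> X Y) \<and>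
     (\<forall>(G, a)\<in>B. Box G a \<in># \<Gamma> \<and> a \<in> X)"

lemma expansion_primitive:
  assumes "expansion \<Gamma> \<Delta> B X Y"
  shows "\<phi> \<in> X \<Longrightarrow> left_premises \<phi> = [] \<Longrightarrow> \<phi> \<in># \<Gamma>"
    and "\<psi> \<in> Y \<Longrightarrow> right_premises \<psi> = [] \<Longrightarrow> \<psi> \<in># \<Delta>"
  using assms unfolding expansion_def decomposed_left_def decomposed_right_def by auto

lemma expansion_compound:
  assumes "expansion \<Gamma> \<Delta> B X Y" and "\<forall>\<phi>\<in>#\<Gamma> + \<Delta>. is_atom \<phi> \<or> \<phi> = Bot \<or> is_boxed \<phi>"
  shows "\<phi> \<in> X \<Longrightarrow> left_premises \<phi> \<noteq> [] \<Longrightarrow> decomposed_left \<phi> X Y"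
    and "\<psi> \<in> Y \<Longrightarrow> right_premises \<psi> \<noteq> [] \<Longrightarrow> decomposed_right \<psi> X Y"
proof -
  assume "\<phi> \<in> X" "left_premises \<phi> \<noteq> []"
  moreover from this(2) have "\<phi> \<notin># \<Gamma>"
    using assms(2) left_premises_eq_Nil_iff by auto
  ultimately show "decomposed_left \<phi> X Y"
    using assms(1) unfolding expansion_def by blast
next
  assume "\<psi> \<in> Y" "right_premises \<psi> \<noteq> []"
  moreover from this(2) have "\<psi> \<notin># \<Delta>"
    using assms(2) right_premises_eq_Nil_iff by auto
  ultimately show "decomposed_right \<psi> X Y"
    using assms(1) unfolding expansion_def by blast
qed

lemma expansion_init: "expansion \<Gamma> \<Delta> {} (set_mset \<Gamma>) (set_mset \<Delta>)"
  by (simp add: expansion_def)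

lemma expansion_left:
  assumes "expansion (add_mset \<phi> \<Gamma>) \<Delta> B X Y" and "(\<Gamma>', \<Delta>') \<in> set (left_premises \<phi>)"
  shows "expansion (\<Gamma>' + \<Gamma>) (\<Delta>' + \<Delta>) B (X \<union> set_mset \<Gamma>') (Y \<union> set_mset \<Delta>')"
proof -
  have "decomposed_left \<phi> (X \<union> set_mset \<Gamma>') (Y \<union> set_mset \<Delta>')"
    using assms(2) unfolding decomposed_left_def by blast
  moreover have "\<not> is_boxed \<phi>"
    using assms(2) by (cases \<phi>) auto
  ultimately show ?thesis
    using assms(1) unfolding expansion_def
    by (fastforce intro: decomposed_left_mono decomposed_right_mono)
qed

lemma expansion_right:
  assumes "expansion \<Gamma> (add_mset \<phi> \<Delta>) B X Y" and "(\<Gamma>', \<Delta>') \<in> set (right_premises \<phi>)"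
  shows "expansion (\<Gamma>' + \<Gamma>) (\<Delta>' + \<Delta>) B (X \<union> set_mset \<Gamma>') (Y \<union> set_mset \<Delta>')"
proof -
  have "decomposed_right \<phi> (X \<union> set_mset \<Gamma>') (Y \<union> set_mset \<Delta>')"
    using assms(2) unfolding decomposed_right_def by blast
  then show ?thesis
    using assms(1) unfolding expansion_def
    by (fastforce intro: decomposed_left_mono decomposed_right_mono)
qed

lemma expansion_unpack:
  assumes "expansion \<Gamma> \<Delta> B X Y" and "Box G a \<in># \<Gamma>"
  shows "expansion (add_mset a \<Gamma>) \<Delta> (insert (G, a) B) (insert a X) Y"
  using assms unfolding expansion_def
  by (fastforce intro: decomposed_left_mono decomposed_right_mono)

definition countermodels_below ::
  "logic \<Rightarrow> ('a, 'p) fm multiset \<Rightarrow> ('a, 'p) fm multiset \<Rightarrow> ('a set \<times> ('a, 'p) fm) set \<Rightarrow> bool" where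
  "countermodels_below L \<Gamma> \<Delta> B \<longleftrightarrow> (\<forall>\<Gamma>' \<Delta>' B' X Y. ((\<Gamma>' + \<Delta>', B'), (\<Gamma> + \<Delta>, B)) \<in> rank_less \<longrightarrow>
     \<not> derivable L \<Gamma>' \<Delta>' \<longrightarrow> expansion \<Gamma>' \<Delta>' B' X Y \<longrightarrow> has_countermodel L X Y)"

lemma countermodel_by_left_rule:
  assumes "countermodels_below L (add_mset \<phi> \<Gamma>) \<Delta> B" and "expansion (add_mset \<phi> \<Gamma>) \<Delta> B X Y"
    and "\<not> derivable L (add_mset \<phi> \<Gamma>) \<Delta>" and "left_premises \<phi> \<noteq> []"
  shows "has_countermodel L X Y"
proof -
  obtain \<Gamma>' \<Delta>' where prem: "(\<Gamma>', \<Delta>') \<in> set (left_premises \<phi>)"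
    and nd: "\<not> derivable L (\<Gamma>' + \<Gamma>) (\<Delta>' + \<Delta>)"
    using assms(3,4) derivable_left_premises by fastforce
  have "((\<Gamma>' + \<Gamma> + (\<Delta>' + \<Delta>), B), (add_mset \<phi> \<Gamma> + \<Delta>, B)) \<in> rank_less"
    using rank_less_decompose[of "\<Gamma>' + \<Delta>'" \<phi> "\<Gamma> + \<Delta>" B] left_premises_smaller[OF prem]
    by (simp add: ac_simps)
  then have "has_countermodel L (X \<union> set_mset \<Gamma>') (Y \<union> set_mset \<Delta>')"
    using assms(1) nd expansion_left[OF assms(2) prem] unfolding countermodels_below_def by blast
  then show ?thesis
    by (rule has_countermodel_mono) auto
qed

lemma countermodel_by_right_rule:
  assumes "countermodels_below L \<Gamma> (add_mset \<phi> \<Delta>) B" and "expansion \<Gamma> (add_mset \<phi> \<Delta>) B X Y"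
    and "\<not> derivable L \<Gamma> (add_mset \<phi> \<Delta>)" and "right_premises \<phi> \<noteq> []"
  shows "has_countermodel L X Y"
proof -
  obtain \<Gamma>' \<Delta>' where prem: "(\<Gamma>', \<Delta>') \<in> set (right_premises \<phi>)"
    and nd: "\<not> derivable L (\<Gamma>' + \<Gamma>) (\<Delta>' + \<Delta>)"
    using assms(3,4) derivable_right_premises by fastforce
  have "((\<Gamma>' + \<Gamma> + (\<Delta>' + \<Delta>), B), (\<Gamma> + add_mset \<phi> \<Delta>, B)) \<in> rank_less"
    using rank_less_decompose[of "\<Gamma>' + \<Delta>'" \<phi> "\<Gamma> + \<Delta>" B] right_premises_smaller[OF prem]
    by (simp add: ac_simps)
  then have "has_countermodel L (X \<union> set_mset \<Gamma>') (Y \<union> set_mset \<Delta>')"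
    using assms(1) nd expansion_right[OF assms(2) prem] unfolding countermodels_below_def by blast
  then show ?thesis
    by (rule has_countermodel_mono) auto
qed

lemma countermodel_by_reflexivity_rule:
  assumes "countermodels_below L \<Gamma> \<Delta> B" and "expansion \<Gamma> \<Delta> B X Y" and "\<not> derivable L \<Gamma> \<Delta>"
    and "L = KT_D" and "Box G a \<in># \<Gamma>" and "(G, a) \<notin> B"
  shows "has_countermodel L X Y"
proof -
  obtain \<Gamma>0 where \<Gamma>: "\<Gamma> = add_mset (Box G a) \<Gamma>0"
    using assms(5) by (metis multi_member_split)
  have "\<not> derivable L (add_mset (Box G a) (add_mset a \<Gamma>0)) \<Delta>"
    using assms(3,4) derivable.DT[of L G a \<Gamma>0 \<Delta>] \<Gamma> by blast
  then have "\<not> derivable L (add_mset a \<Gamma>) \<Delta>"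
    by (metis \<Gamma> add_mset_commute)
  moreover have "((add_mset a \<Gamma> + \<Delta>, insert (G, a) B), (\<Gamma> + \<Delta>, B)) \<in> rank_less"
    using rank_less_unpack[of G a "\<Gamma> + \<Delta>" B] assms(5,6) by simp
  ultimately have "has_countermodel L (insert a X) Y"
    using assms(1) expansion_unpack[OF assms(2,5)] unfolding countermodels_below_def by blast
  then show ?thesis
    by (rule has_countermodel_mono) auto
qed

text \<open>Each child of the root of a countermodel for an irreducible sequent refutes the premise of a
  modal rule: of \<open>D_K\<close> for a boxed formula \<open>Box G \<beta>\<close> of the succedent, of \<open>D_D\<close> for an agent.\<close>

definition leaf_edges :: "logic \<Rightarrow> ('a, 'p) fm multiset \<Rightarrow> ('a, 'p) edge set" where
  "leaf_edges L \<Delta> = Inl ` set_mset (boxes \<Delta>) \<union> (if L = KD_D then range Inr else {})"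

fun edge_label :: "('a, 'p) edge \<Rightarrow> 'a set \<Rightarrow> bool" where
  "edge_label (Inl (G, \<beta>)) = (\<lambda>H. H \<subseteq> G)"
| "edge_label (Inr a) = (\<lambda>H. H = {a})"

fun edge_refuted :: "('a, 'p) edge \<Rightarrow> ('a, 'p) fm set" where
  "edge_refuted (Inl (G, \<beta>)) = {\<beta>}"
| "edge_refuted (Inr a) = {}"

lemma Inl_in_leaf_edges [simp]: "Inl (G, \<beta>) \<in> leaf_edges L \<Delta> \<longleftrightarrow> Box G \<beta> \<in># \<Delta>"
  by (auto simp: leaf_edges_def in_boxes_iff)

lemma Inr_in_leaf_edges [simp]: "Inr a \<in> leaf_edges L \<Delta> \<longleftrightarrow> L = KD_D"
  by (auto simp: leaf_edges_def)

lemma finite_leaf_edges: "finite (leaf_edges L (\<Delta> :: ('a::finite, 'p) fm multiset))"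
  by (simp add: leaf_edges_def)

lemma edge_label_antimono: "G \<noteq> {} \<Longrightarrow> G \<subseteq> H \<Longrightarrow> edge_label t H \<Longrightarrow> edge_label t G"
  by (cases t) auto

lemma countermodel_of_modal_premise:
  fixes \<Gamma> \<Delta> \<Gamma>' \<Delta>' :: "('a, 'p) fm multiset"
  assumes "countermodels_below L \<Gamma> \<Delta> B" and "\<not> derivable L \<Gamma>' \<Delta>'" and "\<Gamma>' + \<Delta>' \<noteq> {#}"
    and "\<forall>\<psi>\<in>#\<Gamma>' + \<Delta>'. \<exists>\<phi>\<in>#\<Gamma> + \<Delta>. modal_depth \<psi> < modal_depth \<phi>"
  shows "has_countermodel L (set_mset \<Gamma>') (set_mset \<Delta>')"
proof -
  have "((\<Gamma>' + \<Delta>', {}), (\<Gamma> + \<Delta>, B)) \<in> rank_less"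
    using assms(3,4) by (rule rank_less_modal)
  then show ?thesis
    using assms(1,2) expansion_init unfolding countermodels_below_def by blast
qed

lemma countermodel_of_leaf_child:
  assumes "countermodels_below L \<Gamma> \<Delta> B" and "\<not> derivable L \<Gamma> \<Delta>"
    and "\<forall>\<phi>\<in>#\<Gamma> + \<Delta>. is_atom \<phi> \<or> \<phi> = Bot \<or> is_boxed \<phi>" and "t \<in> leaf_edges L \<Delta>"
  shows "has_countermodel L (set_mset (box_bodies (edge_label t) \<Gamma>)) (edge_refuted t)"
proof -
  consider (box) G \<beta> where "t = Inl (G, \<beta>)" | (agent) a where "t = Inr a"
    by (metis sum.exhaust surj_pair)
  then show ?thesis
  proof cases
    case (box G \<beta>)
    then obtain \<Delta>0 where \<Delta>: "\<Delta> = add_mset (Box G \<beta>) \<Delta>0"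
      using assms(4) by (metis Inl_in_leaf_edges multi_member_split)
    have nd: "\<not> derivable L (box_bodies (\<lambda>H. H \<subseteq> G) \<Gamma>) {#\<beta>#}"
      using assms(2,3) derivable_box_right[of \<Gamma> \<Delta>0] by (auto simp: \<Delta>)
    have depth: "\<forall>\<psi>\<in>#box_bodies (\<lambda>H. H \<subseteq> G) \<Gamma> + {#\<beta>#}. \<exists>\<phi>\<in>#\<Gamma> + \<Delta>. modal_depth \<psi> < modal_depth \<phi>"
      using modal_depth_box_bodies by (fastforce simp: \<Delta>)
    have "has_countermodel L (set_mset (box_bodies (\<lambda>H. H \<subseteq> G) \<Gamma>)) (set_mset {#\<beta>#})"
      using countermodel_of_modal_premise[OF assms(1) nd _ depth] by simp
    then show ?thesis
      by (simp add: box)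
  next
    case (agent a)
    then have KD: "L = KD_D"
      using assms(4) by simp
    show ?thesis
    proof (cases "box_bodies (\<lambda>H. H = {a}) \<Gamma> = {#}")
      case True
      then show ?thesis
        using has_countermodel_empty by (simp add: agent)
    next
      case False
      have nd: "\<not> derivable L (box_bodies (\<lambda>H. H = {a}) \<Gamma>) {#}"
        using assms(2) derivable_serial[OF KD assms(3) False] by blast
      have depth: "\<forall>\<psi>\<in>#box_bodies (\<lambda>H. H = {a}) \<Gamma> + {#}. \<exists>\<phi>\<in>#\<Gamma> + \<Delta>. modal_depth \<psi> < modal_depth \<phi>"
        using modal_depth_box_bodies by fastforce
      have "has_countermodel L (set_mset (box_bodies (\<lambda>H. H = {a}) \<Gamma>)) (set_mset {#})"
        using countermodel_of_modal_premise[OF assms(1) nd _ depth] False by simp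
      then show ?thesis
        by (simp add: agent)
    qed
  qed
qed

definition leaf_children :: "logic \<Rightarrow> ('a, 'p) fm multiset \<Rightarrow> ('a, 'p) fm multiset
    \<Rightarrow> (('a, 'p) edge \<Rightarrow> (('a, 'p) edge list, 'a, 'p) model) \<Rightarrow> (('a, 'p) edge \<Rightarrow> ('a, 'p) edge list) \<Rightarrow> bool" where
  "leaf_children L \<Gamma> \<Delta> M r \<longleftrightarrow> (\<forall>t\<in>leaf_edges L \<Delta>. finite (W (M t)) \<and> model_class L (M t) \<and>
     r t \<in> W (M t) \<and> (\<forall>\<phi>\<in>#box_bodies (edge_label t) \<Gamma>. sat (M t) (r t) \<phi>) \<and>
     (\<forall>\<psi>\<in>edge_refuted t. \<not> sat (M t) (r t) \<psi>))"

abbreviation leaf_model :: "logic \<Rightarrow> ('a, 'p) fm multiset \<Rightarrow> ('a, 'p) fm multiset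
    \<Rightarrow> (('a, 'p) edge \<Rightarrow> (('a, 'p) edge list, 'a, 'p) model) \<Rightarrow> (('a, 'p) edge \<Rightarrow> ('a, 'p) edge list)
    \<Rightarrow> (('a, 'p) edge list, 'a, 'p) model" where
  "leaf_model L \<Gamma> \<Delta> M r \<equiv> tree_model (\<lambda>p. Atom p \<in># \<Gamma>) (L = KT_D) (leaf_edges L \<Delta>) M r edge_label"

lemma obtain_leaf_children:
  fixes \<Gamma> \<Delta> :: "('a, 'p) fm multiset"
  assumes "countermodels_below L \<Gamma> \<Delta> B" and "\<not> derivable L \<Gamma> \<Delta>"
    and "\<forall>\<phi>\<in>#\<Gamma> + \<Delta>. is_atom \<phi> \<or> \<phi> = Bot \<or> is_boxed \<phi>"
  obtains M r where "leaf_children L \<Gamma> \<Delta> M r"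
proof -
  have "\<forall>t\<in>leaf_edges L \<Delta>. has_countermodel L (set_mset (box_bodies (edge_label t) \<Gamma>)) (edge_refuted t)"
    using countermodel_of_leaf_child[OF assms] by blast
  then obtain M :: "('a, 'p) edge \<Rightarrow> (('a, 'p) edge list, 'a, 'p) model" and r
    where "\<forall>t\<in>leaf_edges L \<Delta>. finite (W (M t)) \<and> model_class L (M t) \<and> r t \<in> W (M t) \<and>
      (\<forall>\<phi>\<in>set_mset (box_bodies (edge_label t) \<Gamma>). sat (M t) (r t) \<phi>) \<and>
      (\<forall>\<psi>\<in>edge_refuted t. \<not> sat (M t) (r t) \<psi>)"
    by (rule has_countermodel_choice)
  then show ?thesis
    by (intro that) (simp add: leaf_children_def)
qed

lemma leaf_model_class:
  fixes \<Delta> :: "('a::finite, 'p) fm multiset"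
  assumes "leaf_children L \<Gamma> \<Delta> M r"
  shows "finite (W (leaf_model L \<Gamma> \<Delta> M r))" and "model_class L (leaf_model L \<Gamma> \<Delta> M r)"
proof -
  show "finite (W (leaf_model L \<Gamma> \<Delta> M r))"
    using assms unfolding leaf_children_def by (intro finite_tree_model finite_leaf_edges) blast
  show "model_class L (leaf_model L \<Gamma> \<Delta> M r)"
  proof (rule model_class_tree_model)
    show "\<forall>t\<in>leaf_edges L \<Delta>. model_class L (M t) \<and> r t \<in> W (M t)"
      using assms unfolding leaf_children_def by blast
    show "edge_label t G" if "G \<noteq> {}" "G \<subseteq> H" "edge_label t H" for t G H
      using that by (rule edge_label_antimono)
    show "\<forall>a. \<exists>t\<in>leaf_edges L \<Delta>. edge_label t {a}" if "L = KD_D"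
      using that by (metis Inr_in_leaf_edges edge_label.simps(2))
  qed
qed

lemma leaf_model_root_Box:
  assumes "leaf_children L \<Gamma> \<Delta> M r" and "Box G a \<in># \<Gamma>" and "([], v) \<in> R (leaf_model L \<Gamma> \<Delta> M r) G"
  shows "v = [] \<and> L = KT_D \<or> sat (leaf_model L \<Gamma> \<Delta> M r) v a"
proof -
  consider "L = KT_D" "v = []" | t where "t \<in> leaf_edges L \<Delta>" "edge_label t G" "v = t # r t"
    using assms(3) by (auto simp: in_R_tree_model)
  then show ?thesis
  proof cases
    case (2 t)
    then have "a \<in># box_bodies (edge_label t) \<Gamma>"
      using assms(2) by (auto simp: in_box_bodies_iff)
    then show ?thesis
      using assms(1) 2 by (simp add: leaf_children_def sat_tree_model_child)
  qed simp
qed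

lemma leaf_model_root_not_Box:
  assumes "leaf_children L \<Gamma> \<Delta> M r" and "Box G a \<in># \<Delta>"
  shows "\<exists>v. ([], v) \<in> R (leaf_model L \<Gamma> \<Delta> M r) G \<and> \<not> sat (leaf_model L \<Gamma> \<Delta> M r) v a"
proof -
  let ?t = "Inl (G, a)"
  have "?t \<in> leaf_edges L \<Delta>"
    using assms(2) by simp
  then have "([], ?t # r ?t) \<in> R (leaf_model L \<Gamma> \<Delta> M r) G"
    and "\<not> sat (leaf_model L \<Gamma> \<Delta> M r) (?t # r ?t) a"
    using assms(1) by (auto simp: in_R_tree_model leaf_children_def sat_tree_model_child)
  then show ?thesis
    by blast
qed

lemma countermodel_of_irreducible:
  fixes \<Gamma> \<Delta> :: "('a::finite, 'p) fm multiset"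
  assumes below: "countermodels_below L \<Gamma> \<Delta> B" and exp: "expansion \<Gamma> \<Delta> B X Y"
    and nd: "\<not> derivable L \<Gamma> \<Delta>"
    and irreducible: "\<forall>\<phi>\<in>#\<Gamma> + \<Delta>. is_atom \<phi> \<or> \<phi> = Bot \<or> is_boxed \<phi>"
    and unpacked: "\<And>G a. L = KT_D \<Longrightarrow> Box G a \<in># \<Gamma> \<Longrightarrow> (G, a) \<in> B"
  shows "has_countermodel L X Y"
proof -
  obtain M r where children: "leaf_children L \<Gamma> \<Delta> M r"
    using below nd irreducible by (rule obtain_leaf_children)
  let ?N = "leaf_model L \<Gamma> \<Delta> M r"
  note in_\<Gamma> = expansion_primitive(1)[OF exp] and in_\<Delta> = expansion_primitive(2)[OF exp]
  have "(\<phi> \<in> X \<longrightarrow> sat ?N [] \<phi>) \<and> (\<phi> \<in> Y \<longrightarrow> \<not> sat ?N [] \<phi>)" for \<phi>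
  proof (rule hintikka_truth)
    fix p
    assume "Atom p \<in> X"
    then show "sat ?N [] (Atom p)"
      using in_\<Gamma>[of "Atom p"] by (simp add: in_V_tree_model)
  next
    fix p
    assume "Atom p \<in> Y"
    then have "Atom p \<in># \<Delta>"
      using in_\<Delta>[of "Atom p"] by simp
    then have "Atom p \<notin># \<Gamma>"
      using nd derivable.init by (metis multi_member_split)
    then show "\<not> sat ?N [] (Atom p)"
      by (simp add: in_V_tree_model)
  next
    show "Bot \<notin> X"
      using in_\<Gamma>[of Bot] nd derivable.botL by (auto dest: multi_member_split)
  next
    fix G a v
    assume "Box G a \<in> X" and succ: "([], v) \<in> R ?N G"
    then have box: "Box G a \<in># \<Gamma>"
      using in_\<Gamma>[of "Box G a"] by simp
    have "L = KT_D \<Longrightarrow> a \<in> X"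
      using unpacked[OF _ box] exp unfolding expansion_def by blast
    then show "v = [] \<and> a \<in> X \<or> sat ?N v a"
      using leaf_model_root_Box[OF children box succ] by blast
  next
    fix G a
    assume "Box G a \<in> Y"
    then show "\<exists>v. ([], v) \<in> R ?N G \<and> \<not> sat ?N v a"
      using in_\<Delta>[of "Box G a"] leaf_model_root_not_Box[OF children] by simp
  qed (use expansion_compound[OF exp irreducible] in auto)
  moreover have "[] \<in> W ?N"
    by (simp add: in_W_tree_model)
  ultimately show ?thesis
    using leaf_model_class[OF children] unfolding has_countermodel_def by blast
qed

lemma not_derivable_has_countermodel:
  fixes \<Gamma> \<Delta> :: "('a::finite, 'p) fm multiset"
  assumes "\<not> derivable L \<Gamma> \<Delta>" and "expansion \<Gamma> \<Delta> B X Y"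
  shows "has_countermodel L X Y"
  using assms
proof (induction "(\<Gamma> + \<Delta>, B)" arbitrary: \<Gamma> \<Delta> B X Y rule: wf_induct_rule[OF wf_rank_less])
  case 1
  then have below: "countermodels_below L \<Gamma> \<Delta> B"
    unfolding countermodels_below_def by blast
  consider (left) \<phi> \<Gamma>0 where "\<Gamma> = add_mset \<phi> \<Gamma>0" "left_premises \<phi> \<noteq> []"
    | (right) \<phi> \<Delta>0 where "\<Delta> = add_mset \<phi> \<Delta>0" "right_premises \<phi> \<noteq> []"
    | (unpack) G a where "L = KT_D" "Box G a \<in># \<Gamma>" "(G, a) \<notin> B"
    | (leaf) "\<forall>\<phi>\<in>#\<Gamma> + \<Delta>. is_atom \<phi> \<or> \<phi> = Bot \<or> is_boxed \<phi>"
        "\<And>G a. L = KT_D \<Longrightarrow> Box G a \<in># \<Gamma> \<Longrightarrow> (G, a) \<in> B"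
    using left_premises_eq_Nil_iff right_premises_eq_Nil_iff
    by (metis multi_member_split union_iff)
  then show ?case
  proof cases
    case left
    with below "1.prems" show ?thesis
      by (intro countermodel_by_left_rule[of L \<phi> \<Gamma>0 \<Delta> B]) simp_all
  next
    case right
    with below "1.prems" show ?thesis
      by (intro countermodel_by_right_rule[of L \<Gamma> \<phi> \<Delta>0 B]) simp_all
  next
    case unpack
    with below "1.prems" show ?thesis
      by (intro countermodel_by_reflexivity_rule) simp_all
  next
    case leaf
    with below "1.prems" show ?thesis
      by (intro countermodel_of_irreducible) simp_all
  qed
qed

section \<open>Renumbering states\<close>

definition map_states :: "('w \<Rightarrow> 'v) \<Rightarrow> ('w, 'a, 'p) model \<Rightarrow> ('v, 'a, 'p) model" where
  "map_states f M = \<lparr> W = f ` W M, R = (\<lambda>G. map_prod f f ` R M G), V = (\<lambda>p. f ` V M p) \<rparr>"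

lemma in_R_map_states: "(x, y) \<in> R M G \<Longrightarrow> (f x, f y) \<in> R (map_states f M) G"
  by (simp add: map_states_def map_prod_imageI)

lemma is_model_map_states:
  assumes "is_model M"
  shows "is_model (map_states f M)"
proof -
  have "R (map_states f M) G \<subseteq> W (map_states f M) \<times> W (map_states f M)" if "G \<noteq> {}" for G
  proof -
    have "R M G \<subseteq> W M \<times> W M"
      using assms that by (simp add: is_model_def)
    then show ?thesis
      by (auto simp: map_states_def)
  qed
  moreover have "V (map_states f M) p \<subseteq> W (map_states f M)" for p
  proof -
    have "V M p \<subseteq> W M"
      using assms by (simp add: is_model_def)
    then show ?thesis
      by (simp add: map_states_def image_mono)
  qed
  moreover have "R (map_states f M) H \<subseteq> R (map_states f M) G" if "G \<noteq> {}" "G \<subseteq> H" for G H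
  proof -
    have "R M H \<subseteq> R M G"
      using assms that by (simp add: is_model_def)
    then show ?thesis
      by (auto simp: map_states_def)
  qed
  ultimately show ?thesis
    unfolding is_model_def by blast
qed

lemma model_class_map_states:
  assumes "model_class L M"
  shows "model_class L (map_states f M)"
proof -
  have "is_model (map_states f M)"
    by (rule is_model_map_states[OF model_class_is_model[OF assms]])
  then show ?thesis
  proof (cases L)
    case KD_D
    have "\<exists>v. (w, v) \<in> R (map_states f M) {a}" if w: "w \<in> W (map_states f M)" for a w
    proof -
      obtain x where "x \<in> W M" "w = f x"
        using w by (auto simp: map_states_def)
      moreover obtain y where "(x, y) \<in> R M {a}"
        using assms KD_D calculation(1) by (auto simp: serial_model_def)
      ultimately have "(w, f y) \<in> R (map_states f M) {a}"
        by (simp add: in_R_map_states)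
      then show ?thesis
        by blast
    qed
    then show ?thesis
      using \<open>is_model (map_states f M)\<close> KD_D by (simp add: serial_model_def)
  next
    case KT_D
    have "(w, w) \<in> R (map_states f M) G" if w: "w \<in> W (map_states f M)" and G: "G \<noteq> {}" for G w
    proof -
      obtain x where "x \<in> W M" "w = f x"
        using w by (auto simp: map_states_def)
      moreover from this(1) have "(x, x) \<in> R M G"
        using assms KT_D G by (simp add: refl_model_def)
      ultimately show ?thesis
        by (simp add: in_R_map_states)
    qed
    then show ?thesis
      using \<open>is_model (map_states f M)\<close> KT_D by (simp add: refl_model_def)
  qed simp
qed

text \<open>Well-formedness excludes \<open>Box {} a\<close>: \<open>is_model\<close> does not confine \<open>R M {}\<close> to \<open>W M\<close>, the
  only set on which \<open>f\<close> is injective.\<close>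

lemma sat_map_states:
  assumes "inj_on f (W M)" and "is_model M" and "x \<in> W M" and "wf_fm \<phi>"
  shows "sat (map_states f M) (f x) \<phi> = sat M x \<phi>"
  using assms(3,4)
proof (induction \<phi> arbitrary: x)
  case (Atom p)
  have "V M p \<subseteq> W M"
    using assms(2) by (simp add: is_model_def)
  then show ?case
    using Atom.prems assms(1) by (auto simp: map_states_def inj_on_def)
next
  case (Box G a)
  have R: "R M G \<subseteq> W M \<times> W M"
    using assms(2) Box.prems(2) by (simp add: is_model_def)
  then have "(f x, v) \<in> R (map_states f M) G \<longleftrightarrow> (\<exists>y. v = f y \<and> (x, y) \<in> R M G)" for v
    using assms(1) Box.prems(1) by (auto simp: map_states_def inj_on_def)
  moreover have "sat (map_states f M) (f y) a = sat M y a" if "(x, y) \<in> R M G" for y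
    using Box.IH Box.prems(2) R that by auto
  ultimately show ?case
    by auto
qed auto

lemma has_countermodel_not_valid_fin:
  fixes \<Gamma> \<Delta> :: "('a, 'p) fm multiset"
  assumes "has_countermodel L (set_mset \<Gamma>) (set_mset \<Delta>)" and "\<forall>\<phi>\<in>#\<Gamma> + \<Delta>. wf_fm \<phi>"
  shows "\<not> valid_fin L \<Gamma> \<Delta>"
proof -
  obtain M :: "(('a, 'p) edge list, 'a, 'p) model" and w where M: "finite (W M)" "model_class L M"
    and w: "w \<in> W M" "\<forall>\<phi>\<in>#\<Gamma>. sat M w \<phi>" "\<forall>\<psi>\<in>#\<Delta>. \<not> sat M w \<psi>"
    using assms(1) unfolding has_countermodel_def by blast
  obtain f :: "('a, 'p) edge list \<Rightarrow> nat" where f: "inj_on f (W M)"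
    using finite_imp_inj_to_nat_seg[OF M(1)] by metis
  let ?M = "map_states f M"
  have "finite (W ?M)" "model_class L ?M" "f w \<in> W ?M"
    using M w(1) model_class_map_states by (auto simp: map_states_def)
  moreover have "\<forall>\<phi>\<in>#\<Gamma>. sat ?M (f w) \<phi>" "\<forall>\<psi>\<in>#\<Delta>. \<not> sat ?M (f w) \<psi>"
    using w assms(2) sat_map_states[OF f model_class_is_model[OF M(2)] w(1)] by auto
  ultimately show ?thesis
    unfolding valid_fin_def valid_seq_in_def by blast
qed

theorem theorem4p8:
  fixes L :: logic
    and \<Gamma> \<Delta> :: "('a::finite, 'p::countable) fm multiset"
  assumes "\<forall>\<phi>\<in>#\<Gamma> + \<Delta>. wf_fm \<phi>"
    and "valid_fin L \<Gamma> \<Delta>"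
  shows "derivable L \<Gamma> \<Delta>"
proof (rule ccontr)
  assume "\<not> derivable L \<Gamma> \<Delta>"
  then have "has_countermodel L (set_mset \<Gamma>) (set_mset \<Delta>)"
    using expansion_init by (rule not_derivable_has_countermodel)
  then show False
    using assms has_countermodel_not_valid_fin by blast
qed

end
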